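(* Let $S$ be a semidomain that is additively reduced, additively Furstenberg, and satisfies $\mathscr{A}_+(S)=S^\times$, and let $G$ be a torsion-free abelian group. Let $f=s_0x^{g_0}+s_1x^{g_1}\in S[G]$ with $s_0,s_1\in S\setminus\{0\}$ and $g_0>g_1$ in $G$. Then: (1) if $s_0\in S^\times$ or $s_1\in S^\times$, then $f$ is irreducible; (2) if $s_0\notin S^\times$ and $s_1\notin S^\times$, then $f$ is the sum of two irreducible elements of $S[G]$.
   Context: A semidomain is a subsemiring (containing $0$ and $1$) of an integral domain; $S^\times$ is the unit group of the multiplicative monoid $S\setminus\{0\}$. $S$ is additively reduced if $0$ is the only invertible element of $(S,+)$. An additive atom is a nonzero $a\in S$ with $a=b+c$ implying $b=0$ or $c=0$; $\mathscr{A}_+(S)$ is the set of additive atoms. $S$ is additively Furstenberg if every nonzero $s\in S$ equals $a+t$ with $a\in\mathscr{A}_+(S)$, $t\in S$. $G$ carries a fixed total order compatible with addition. $S[G]$ is the semidomain of formal finite sums $\sum_{g\in G}s_gx^g$ with polynomial operations. $f\in S[G]$ is irreducible if it is nonzero, a nonunit, and $f=pq$ implies $p$ or $q$ is a unit of $S[G]$. *)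

theory Defs
  imports Main "HOL-Library.Poly_Mapping"
begin

definition semidomain :: "'a::idom set \<Rightarrow> bool" where
  "semidomain S \<longleftrightarrow> 0 \<in> S \<and> 1 \<in> S \<and>
     (\<forall>a\<in>S. \<forall>b\<in>S. a + b \<in> S) \<and> (\<forall>a\<in>S. \<forall>b\<in>S. a * b \<in> S)"

definition sunits :: "'a::idom set \<Rightarrow> 'a set" where
  "sunits S = {u \<in> S - {0}. \<exists>v\<in>S - {0}. u * v = 1}"

definition add_reduced :: "'a::idom set \<Rightarrow> bool" where
  "add_reduced S \<longleftrightarrow> (\<forall>a\<in>S. (\<exists>b\<in>S. a + b = 0) \<longrightarrow> a = 0)"

definition add_atoms :: "'a::idom set \<Rightarrow> 'a set" where
  "add_atoms S = {a \<in> S. a \<noteq> 0 \<and> (\<forall>b\<in>S. \<forall>c\<in>S. a = b + c \<longrightarrow> b = 0 \<or> c = 0)}"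

definition add_furstenberg :: "'a::idom set \<Rightarrow> bool" where
  "add_furstenberg S \<longleftrightarrow> (\<forall>s\<in>S - {0}. \<exists>a\<in>add_atoms S. \<exists>t\<in>S. s = a + t)"

definition torsion_free :: "'g::ab_group_add itself \<Rightarrow> bool" where
  "torsion_free _ \<longleftrightarrow> (\<forall>(g::'g) (n::nat). n > 0 \<longrightarrow> (\<Sum>i<n. g) = 0 \<longrightarrow> g = 0)"

text \<open>The semigroup semidomain S[G]: finitely supported functions G \<Rightarrow> S,
  inside the group algebra (finitely supported maps, with convolution product.\<close>
definition group_semiring :: "'a::idom set \<Rightarrow> ('g::monoid_add \<Rightarrow>\<^sub>0 'a) set" where
  "group_semiring S = {p. \<forall>g. Poly_Mapping.lookup p g \<in> S}"

definition gs_unit :: "'a::idom set \<Rightarrow> ('g::monoid_add \<Rightarrow>\<^sub>0 'a) \<Rightarrow> bool" where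
  "gs_unit S u \<longleftrightarrow> u \<in> group_semiring S \<and> (\<exists>v\<in>group_semiring S. u * v = 1)"

definition gs_irreducible :: "'a::idom set \<Rightarrow> ('g::monoid_add \<Rightarrow>\<^sub>0 'a) \<Rightarrow> bool" where
  "gs_irreducible S f \<longleftrightarrow> f \<in> group_semiring S \<and> f \<noteq> 0 \<and> \<not> gs_unit S f \<and>
     (\<forall>p\<in>group_semiring S. \<forall>q\<in>group_semiring S. f = p * q \<longrightarrow> gs_unit S p \<or> gs_unit S q)"

end

theory Submission
  imports Defs
begin

text \<open>
  In an additively reduced semidomain no cancellation can occur in a product, so
  the support of \<open>p * q\<close> is the sumset of the supports of \<open>p\<close> and \<open>q\<close>.
  Over an ordered group, two factors with at least two exponents each produce at least
  three exponents \<open>a\<^sub>1 + b\<^sub>1 < a\<^sub>2 + b\<^sub>1 < a\<^sub>2 + b\<^sub>2\<close>; hence a binomial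
  can only factor as monomial times binomial, and the monomial factor \<open>s x\<^sup>a\<close> is a unit
  as soon as \<open>s\<close> divides a unit coefficient of the binomial. If both coefficients are
  nonunits, split each as (atom) + (rest) and regroup:
  \<open>s\<^sub>0 x\<^sup>g\<^sup>0 + s\<^sub>1 x\<^sup>g\<^sup>1 = (a\<^sub>0 x\<^sup>g\<^sup>0 + t\<^sub>1 x\<^sup>g\<^sup>1) + (t\<^sub>0 x\<^sup>g\<^sup>0 + a\<^sub>1 x\<^sup>g\<^sup>1)\<close>,
  where the atoms \<open>a\<^sub>i\<close> are units and the rests \<open>t\<^sub>i\<close> are nonzero.
\<close>

lemma semidomain_sum_closed:
  assumes "semidomain S" "\<And>x. x \<in> A \<Longrightarrow> h x \<in> S"
  shows "sum h A \<in> S"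
proof -
  have "sum h B \<in> S" if "finite B" "B \<subseteq> A" for B
    using that by (induction B rule: finite_induct) (use assms in \<open>auto simp: semidomain_def\<close>)
  then show ?thesis
    using assms(1) by (cases "finite A") (auto simp: semidomain_def)
qed

lemma add_reduced_sum_eq_0_iff:
  assumes "semidomain S" "add_reduced S" "finite A" "\<And>x. x \<in> A \<Longrightarrow> h x \<in> S"
  shows "sum h A = 0 \<longleftrightarrow> (\<forall>x\<in>A. h x = 0)"
  using assms(3,4)
proof (induction A rule: finite_induct)
  case (insert x F)
  have "sum h F \<in> S"
    using insert.prems by (intro semidomain_sum_closed[OF assms(1)]) auto
  then have "h x + sum h F = 0 \<longleftrightarrow> h x = 0 \<and> sum h F = 0"
    using assms(2) insert.prems add.commute[of "h x"] unfolding add_reduced_def by force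
  with insert show ?case by simp
qed simp

lemma lookup_mult_group:
  fixes p q :: "'g::ab_group_add \<Rightarrow>\<^sub>0 'a::comm_semiring_0"
  shows "Poly_Mapping.lookup (p * q) k =
    (\<Sum>l\<in>Poly_Mapping.keys p. Poly_Mapping.lookup p l * Poly_Mapping.lookup q (k - l))"
proof -
  have "(\<Sum>r. Poly_Mapping.lookup q r when k = l + r) = Poly_Mapping.lookup q (k - l)" for l
  proof -
    have "\<And>r. (k = l + r) = (r = k - l)" by (auto simp: algebra_simps)
    then show ?thesis by simp
  qed
  then have "Poly_Mapping.lookup (p * q) k =
      (\<Sum>l. Poly_Mapping.lookup p l * Poly_Mapping.lookup q (k - l))"
    by (simp add: lookup_mult)
  also have "\<dots> = (\<Sum>l\<in>Poly_Mapping.keys p.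
      Poly_Mapping.lookup p l * Poly_Mapping.lookup q (k - l))"
    by (rule Sum_any.expand_superset) (auto simp: in_keys_iff)
  finally show ?thesis .
qed

lemma keys_mult_group_semiring:
  fixes p q :: "'g::ab_group_add \<Rightarrow>\<^sub>0 'a::idom"
  assumes S: "semidomain S" "add_reduced S"
    and pq: "p \<in> group_semiring S" "q \<in> group_semiring S"
  shows "Poly_Mapping.keys (p * q) =
    {a + b | a b. a \<in> Poly_Mapping.keys p \<and> b \<in> Poly_Mapping.keys q}"
proof
  show "{a + b | a b. a \<in> Poly_Mapping.keys p \<and> b \<in> Poly_Mapping.keys q}
      \<subseteq> Poly_Mapping.keys (p * q)"
  proof clarify
    fix a b
    assume a: "a \<in> Poly_Mapping.keys p" and b: "b \<in> Poly_Mapping.keys q"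
    let ?term = "\<lambda>l. Poly_Mapping.lookup p l * Poly_Mapping.lookup q (a + b - l)"
    have "?term l \<in> S" for l
      using S(1) pq unfolding semidomain_def group_semiring_def by auto
    then have "(\<Sum>l\<in>Poly_Mapping.keys p. ?term l) = 0 \<longleftrightarrow> (\<forall>l\<in>Poly_Mapping.keys p. ?term l = 0)"
      by (intro add_reduced_sum_eq_0_iff[OF S finite_keys])
    moreover have "?term a \<noteq> 0"
      using a b by (simp add: in_keys_iff)
    ultimately have "Poly_Mapping.lookup (p * q) (a + b) \<noteq> 0"
      unfolding lookup_mult_group using a by blast
    then show "a + b \<in> Poly_Mapping.keys (p * q)" by (simp add: in_keys_iff)
  qed
qed (rule keys_mult)

lemma sunits_left_factor:
  assumes "semidomain S" "s \<in> S" "t \<in> S" "s * t \<in> sunits S"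
  shows "s \<in> sunits S"
proof -
  obtain w where w: "w \<in> S" "s * t * w = 1"
    using assms(4) by (auto simp: sunits_def)
  then have "t * w \<in> S" "s * (t * w) = 1"
    using assms(1,3) by (auto simp: semidomain_def mult.assoc)
  with assms(2) show ?thesis by (auto simp: sunits_def)
qed

lemma gs_unit_single:
  fixes a :: "'g::ab_group_add"
  assumes "semidomain S" "s \<in> sunits S"
  shows "gs_unit S (Poly_Mapping.single a s)"
proof -
  obtain t where t: "t \<in> S" "s * t = 1"
    using assms(2) by (auto simp: sunits_def)
  have "Poly_Mapping.single a s * Poly_Mapping.single (- a) t = 1"
    by (simp add: mult_single t(2))
  moreover have "Poly_Mapping.single b c \<in> group_semiring S" if "c \<in> S" for b c
    using that assms(1) by (auto simp: group_semiring_def lookup_single when_def semidomain_def)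
  ultimately show ?thesis
    using assms(2) t(1) unfolding gs_unit_def sunits_def by blast
qed

lemma gs_unit_keys_singleton:
  fixes u :: "'g::ab_group_add \<Rightarrow>\<^sub>0 'a::idom"
  assumes "semidomain S" "add_reduced S" "gs_unit S u"
  shows "\<exists>a. Poly_Mapping.keys u = {a}"
proof -
  obtain v where v: "u \<in> group_semiring S" "v \<in> group_semiring S" "u * v = 1"
    using assms(3) by (auto simp: gs_unit_def)
  then have keys_uv: "{a + b | a b. a \<in> Poly_Mapping.keys u \<and> b \<in> Poly_Mapping.keys v} = {0}"
    using keys_mult_group_semiring[OF assms(1,2) v(1,2)] by simp
  have "u \<noteq> 0" "v \<noteq> 0" using v(3) by auto
  then obtain b where "b \<in> Poly_Mapping.keys v" and "Poly_Mapping.keys u \<noteq> {}" by fastforce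
  moreover have "a = - b" if "a \<in> Poly_Mapping.keys u" for a
    using keys_uv that \<open>b \<in> Poly_Mapping.keys v\<close> by (auto simp: eq_neg_iff_add_eq_0)
  ultimately have "Poly_Mapping.keys u = {- b}" by blast
  then show ?thesis ..
qed

lemma gs_unit_if_monomial_factor:
  fixes p q :: "'g::ab_group_add \<Rightarrow>\<^sub>0 'a::idom"
  assumes S: "semidomain S"
    and pq: "p \<in> group_semiring S" "q \<in> group_semiring S"
    and p: "Poly_Mapping.keys p = {a}"
    and unit: "Poly_Mapping.lookup (p * q) h \<in> sunits S"
  shows "gs_unit S p"
proof -
  define s where "s = Poly_Mapping.lookup p a"
  have p_eq: "p = Poly_Mapping.single a s"
    by (rule poly_mapping_eqI) (use p in \<open>auto simp: s_def lookup_single when_def in_keys_iff\<close>)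
  have "Poly_Mapping.lookup (p * q) h = s * Poly_Mapping.lookup q (h - a)"
    using p by (simp add: lookup_mult_group s_def)
  moreover have "s \<in> S" "Poly_Mapping.lookup q (h - a) \<in> S"
    using pq by (auto simp: group_semiring_def s_def)
  ultimately have "s \<in> sunits S"
    using sunits_left_factor[OF S] unit by metis
  then show ?thesis
    unfolding p_eq by (rule gs_unit_single[OF S])
qed

lemma card_keys_factor_le_1_if_card_keys_mult_le_2:
  fixes p q :: "'g::linordered_ab_group_add \<Rightarrow>\<^sub>0 'a::idom"
  assumes S: "semidomain S" "add_reduced S"
    and pq: "p \<in> group_semiring S" "q \<in> group_semiring S"
    and card_pq: "card (Poly_Mapping.keys (p * q)) \<le> 2"
  shows "card (Poly_Mapping.keys p) \<le> 1 \<or> card (Poly_Mapping.keys q) \<le> 1"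
proof (rule ccontr)
  have two_keys: "\<exists>x\<in>Poly_Mapping.keys r. \<exists>y\<in>Poly_Mapping.keys r. x < y"
    if "\<not> card (Poly_Mapping.keys r) \<le> 1" for r :: "'g \<Rightarrow>\<^sub>0 'a"
    using that unfolding One_nat_def card_le_Suc0_iff_eq[OF finite_keys]
    by (metis linorder_neqE)
  assume "\<not> ?thesis"
  then obtain a1 a2 b1 b2 where
    a: "a1 \<in> Poly_Mapping.keys p" "a2 \<in> Poly_Mapping.keys p" "a1 < a2" and
    b: "b1 \<in> Poly_Mapping.keys q" "b2 \<in> Poly_Mapping.keys q" "b1 < b2"
    using two_keys by meson
  have "{a1 + b1, a2 + b1, a2 + b2} \<subseteq> Poly_Mapping.keys (p * q)"
    using a b by (auto simp: keys_mult_group_semiring[OF S pq])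
  moreover have "a1 + b1 < a2 + b1" "a2 + b1 < a2 + b2" "a1 + b1 < a2 + b2"
    using a(3) b(3) add_strict_mono by simp_all
  then have "card {a1 + b1, a2 + b1, a2 + b2} = 3" by (auto simp: card_insert_if)
  ultimately have "3 \<le> card (Poly_Mapping.keys (p * q))"
    by (metis card_mono finite_keys)
  with card_pq show False by simp
qed

lemma gs_irreducible_binomial:
  fixes h0 h1 :: "'g::linordered_ab_group_add"
  assumes S: "semidomain S" "add_reduced S"
    and c: "c0 \<in> S - {0}" "c1 \<in> S - {0}" and h: "h0 \<noteq> h1"
    and unit: "c0 \<in> sunits S \<or> c1 \<in> sunits S"
  shows "gs_irreducible S (Poly_Mapping.single h0 c0 + Poly_Mapping.single h1 c1)"
    (is "gs_irreducible S ?f")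
proof -
  have f_in: "?f \<in> group_semiring S"
    using S(1) c by (auto simp: group_semiring_def lookup_add lookup_single when_def semidomain_def)
  have keys_f: "Poly_Mapping.keys ?f = {h0, h1}"
    using c h by (auto simp: in_keys_iff lookup_add lookup_single when_def split: if_splits)
  have "Poly_Mapping.lookup ?f h0 = c0" "Poly_Mapping.lookup ?f h1 = c1"
    using h by (simp_all add: lookup_add lookup_single)
  with unit obtain h where h_unit: "Poly_Mapping.lookup ?f h \<in> sunits S" by metis
  have "\<not> gs_unit S ?f"
    using gs_unit_keys_singleton[OF S, of ?f] keys_f h by force
  moreover have "gs_unit S p \<or> gs_unit S q"
    if pq: "p \<in> group_semiring S" "q \<in> group_semiring S" and f_eq: "?f = p * q" for p q
  proof -
    have "p \<noteq> 0" "q \<noteq> 0" using f_eq keys_f by auto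
    have monomial_unit: "gs_unit S x"
      if "x \<in> group_semiring S" "y \<in> group_semiring S" "x \<noteq> 0" "?f = x * y"
        "card (Poly_Mapping.keys x) \<le> 1" for x y
    proof -
      from that(3) obtain a where a: "a \<in> Poly_Mapping.keys x" by fastforce
      with that(5) have "Poly_Mapping.keys x = {a}"
        unfolding One_nat_def card_le_Suc0_iff_eq[OF finite_keys] by blast
      from gs_unit_if_monomial_factor[OF S(1) that(1,2) this] show ?thesis
        using h_unit that(4) by simp
    qed
    have "card (Poly_Mapping.keys (p * q)) \<le> 2"
      using f_eq keys_f h by simp
    from card_keys_factor_le_1_if_card_keys_mult_le_2[OF S pq this] show ?thesis
      using monomial_unit[of p q] monomial_unit[of q p] pq f_eq \<open>p \<noteq> 0\<close> \<open>q \<noteq> 0\<close>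
      by (auto simp: mult.commute)
  qed
  ultimately show ?thesis
    using f_in keys_f unfolding gs_irreducible_def by auto
qed

theorem lemma3p4:
  fixes S :: "'a::idom set"
    and s0 s1 :: 'a
    and g0 g1 :: "'g::linordered_ab_group_add"
  assumes "semidomain S"
    and "add_reduced S"
    and "add_furstenberg S"
    and "add_atoms S = sunits S"
    and "torsion_free TYPE('g)"
    and "s0 \<in> S - {0}" and "s1 \<in> S - {0}"
    and "g0 > g1"
  defines "f \<equiv> Poly_Mapping.single g0 s0 + Poly_Mapping.single g1 s1"
  shows "(s0 \<in> sunits S \<or> s1 \<in> sunits S \<longrightarrow> gs_irreducible S f)
    \<and> (s0 \<notin> sunits S \<and> s1 \<notin> sunits S \<longrightarrow>
         (\<exists>p q. gs_irreducible S p \<and> gs_irreducible S q \<and> f = p + q))"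
proof (intro conjI impI)
  have g: "g0 \<noteq> g1" using assms(8) by simp
  show "gs_irreducible S f" if "s0 \<in> sunits S \<or> s1 \<in> sunits S"
    unfolding f_def by (rule gs_irreducible_binomial[OF assms(1,2,6,7) g that])
  assume nonunits: "s0 \<notin> sunits S \<and> s1 \<notin> sunits S"
  obtain a0 t0 a1 t1 where atoms: "a0 \<in> sunits S" "a1 \<in> sunits S"
    and rests: "t0 \<in> S" "t1 \<in> S" and split: "s0 = a0 + t0" "s1 = a1 + t1"
    using assms(3,4,6,7) unfolding add_furstenberg_def by metis
  have "a0 \<in> S - {0}" "a1 \<in> S - {0}" "t0 \<in> S - {0}" "t1 \<in> S - {0}"
    using atoms rests split nonunits by (auto simp: sunits_def)
  then have "gs_irreducible S (Poly_Mapping.single g0 a0 + Poly_Mapping.single g1 t1)"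
    "gs_irreducible S (Poly_Mapping.single g0 t0 + Poly_Mapping.single g1 a1)"
    using gs_irreducible_binomial[OF assms(1,2) _ _ g] atoms by simp_all
  moreover have "f = (Poly_Mapping.single g0 a0 + Poly_Mapping.single g1 t1)
      + (Poly_Mapping.single g0 t0 + Poly_Mapping.single g1 a1)"
    unfolding f_def split by (simp add: single_add algebra_simps)
  ultimately show "\<exists>p q. gs_irreducible S p \<and> gs_irreducible S q \<and> f = p + q" by blast
qed

end
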